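(* Let $R$ be a commutative ring with unity, $\lambda$ a length function on $R$-modules, $S=R[x_1,\dots,x_k]$, and let $\bar N=(N_n)_{n\in\mathbb{N}}$ be an increasing filtering of the $S$-module $N$ with degrees $\bar\gamma\in\mathbb{N}^k$. Let $F_{\bar N}(t)=\sum_{n=0}^\infty\lambda(N_n)t^n$. Then $F_{\bar N}=F_{\mathrm{Rees}(\bar N)}$. Consequently, if $\gamma_i>0$ for $i=1,\dots,k$, $\lambda(N_n)<\infty$ for every $n$, and $\mathrm{Rees}(\bar N)$ is Noetherian as an $S[y]$-module, then there is a polynomial $p(t)\in\mathbb{R}[t]$ with \[F_{\bar N}(t)=\frac{p(t)}{(1-t)\prod_{i=1}^k(1-t^{\gamma_i})}.\]
   Context: A length function on $R$-modules is a function $\lambda$ from $R$-modules to $\mathbb{R}_{\ge0}\cup\{\infty\}$ with $\lambda(0)=0$, invariant under isomorphism, additive on short exact sequences, and with $\lambda(M)=\sup\{\lambda(M'):M'\le M$ finitely generated$\}$. An increasing filtering of an $S$-module $N$ with degrees $\bar\gamma=(\gamma_1,\dots,\gamma_k)\in\mathbb{N}^k$ is an increasing sequence of $R$-submodules $N_0\le N_1\le\dots$ with $\bigcup_iN_i=N$ and $x_iN_j\subseteq N_{j+\gamma_i}$ for all $j\in\mathbb{N}$, $i\le k$. Its blow-up $\mathrm{Rees}(\bar N)=\bigoplus_{n\in\mathbb{N}}N_ny^n$ is the graded $S[y]$-module with grading given by this decomposition, with $x_i(vy^j)=(x_iv)y^{j+\gamma_i}$ (so $x_i$ has degree $\gamma_i$)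 and $y(vy^j)=vy^{j+1}$ (so $y$ has degree $1$) for $v\in N_j$, extended $R$-linearly. For an $\mathbb{N}$-graded module $\bar M=\bigoplus M_n$, $F_{\bar M}(t)=\sum_n\lambda(M_n)t^n$. *)

theory Defs
  imports "HOL-Algebra.Module" "HOL-Computational_Algebra.Polynomial_FPS"
    "HOL-Library.Extended_Nonnegative_Real"
begin

definition mod_hom :: "('r, 'x) ring_scheme \<Rightarrow> ('r, 'a) module \<Rightarrow> ('r, 'b) module \<Rightarrow> ('a \<Rightarrow> 'b) \<Rightarrow> bool"
  where "mod_hom R A B f \<longleftrightarrow>
     (\<forall>x\<in>carrier A. f x \<in> carrier B) \<and>
     (\<forall>x\<in>carrier A. \<forall>y\<in>carrier A. f (x \<oplus>\<^bsub>A\<^esub> y) = f x \<oplus>\<^bsub>B\<^esub> f y) \<and>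
     (\<forall>r\<in>carrier R. \<forall>x\<in>carrier A. f (r \<odot>\<^bsub>A\<^esub> x) = r \<odot>\<^bsub>B\<^esub> f x)"

definition mod_iso :: "('r, 'x) ring_scheme \<Rightarrow> ('r, 'a) module \<Rightarrow> ('r, 'b) module \<Rightarrow> bool"
  where "mod_iso R A B \<longleftrightarrow> (\<exists>f. mod_hom R A B f \<and> bij_betw f (carrier A) (carrier B))"

definition mod_span :: "('r, 'x) ring_scheme \<Rightarrow> ('r, 'a) module \<Rightarrow> 'a set \<Rightarrow> 'a set"
  where "mod_span R M G = \<Inter>{Q. submodule Q R M \<and> G \<subseteq> Q}"

definition fin_gen_submodule :: "('r, 'x) ring_scheme \<Rightarrow> ('r, 'a) module \<Rightarrow> 'a set \<Rightarrow> bool"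
  where "fin_gen_submodule R M P \<longleftrightarrow>
     submodule P R M \<and> (\<exists>G. finite G \<and> G \<subseteq> carrier M \<and> P = mod_span R M G)"

abbreviation submod :: "('r, 'a) module \<Rightarrow> 'a set \<Rightarrow> ('r, 'a) module"
  where "submod M P \<equiv> M\<lparr>carrier := P\<rparr>"

text \<open>A length function on the R-modules whose elements live in the HOL type of the
  modules given to lam (values in [0,\<infinity>] = ennreal).\<close>
definition length_function :: "'r ring \<Rightarrow> (('r, 'a) module \<Rightarrow> ennreal) \<Rightarrow> bool"
  where "length_function R lam \<longleftrightarrow>
     (\<forall>M. Module.module R M \<and> carrier M = {\<zero>\<^bsub>M\<^esub>} \<longrightarrow> lam M = 0) \<and>
     (\<forall>A B. Module.module R A \<and> Module.module R B \<and> mod_iso R A B \<longrightarrow> lam A = lam B) \<and>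
     (\<forall>A B C f g. Module.module R A \<and> Module.module R B \<and> Module.module R C \<and>
        mod_hom R A B f \<and> mod_hom R B C g \<and> inj_on f (carrier A) \<and>
        g ` carrier B = carrier C \<and>
        f ` carrier A = {x \<in> carrier B. g x = \<zero>\<^bsub>C\<^esub>}
        \<longrightarrow> lam B = lam A + lam C) \<and>
     (\<forall>M. Module.module R M \<longrightarrow>
        lam M = (SUP P\<in>{P. fin_gen_submodule R M P}. lam (submod M P)))"

text \<open>Two length functions (on two HOL types of modules) which are restrictions of one
  length function on all R-modules: they agree on isomorphic modules.\<close>
definition length_compatible :: "'r ring \<Rightarrow> (('r, 'a) module \<Rightarrow> ennreal) \<Rightarrow> (('r, 'b) module \<Rightarrow> ennreal) \<Rightarrow> bool"
  where "length_compatible R lam1 lam2 \<longleftrightarrow>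
     (\<forall>A B. Module.module R A \<and> Module.module R B \<and> mod_iso R A B \<longrightarrow> lam1 A = lam2 B)"

text \<open>An S-module for S = R[x_0,...,x_{k-1}] is an R-module N together with k pairwise
  commuting R-linear endomorphisms X 0, ..., X (k-1) (the actions of the variables).\<close>
definition poly_module :: "'r ring \<Rightarrow> ('r, 'a) module \<Rightarrow> nat \<Rightarrow> (nat \<Rightarrow> 'a \<Rightarrow> 'a) \<Rightarrow> bool"
  where "poly_module R N k X \<longleftrightarrow> Module.module R N \<and>
     (\<forall>i<k. mod_hom R N N (X i)) \<and>
     (\<forall>i<k. \<forall>j<k. \<forall>v\<in>carrier N. X i (X j v) = X j (X i v))"

definition incr_filtering ::
  "'r ring \<Rightarrow> ('r, 'a) module \<Rightarrow> nat \<Rightarrow> (nat \<Rightarrow> 'a \<Rightarrow> 'a) \<Rightarrow> (nat \<Rightarrow> nat) \<Rightarrow> (nat \<Rightarrow> 'a set) \<Rightarrow> bool"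
  where "incr_filtering R N k X \<gamma> Nf \<longleftrightarrow>
     (\<forall>n. submodule (Nf n) R N) \<and> (\<forall>n. Nf n \<subseteq> Nf (Suc n)) \<and>
     (\<Union>n. Nf n) = carrier N \<and>
     (\<forall>i<k. \<forall>j. X i ` Nf j \<subseteq> Nf (j + \<gamma> i))"

text \<open>The blow-up Rees(Nf) = \<Oplus>_n N_n y^n, realised as finitely supported sequences
  f with f n \<in> N_n (f n is the coefficient of y^n).\<close>
definition rees :: "('r, 'a) module \<Rightarrow> (nat \<Rightarrow> 'a set) \<Rightarrow> ('r, nat \<Rightarrow> 'a) module"
  where "rees N Nf =
    \<lparr>carrier = {f. (\<forall>n. f n \<in> Nf n) \<and> finite {n. f n \<noteq> \<zero>\<^bsub>N\<^esub>}},
     monoid.mult = (\<lambda>f g n. f n \<otimes>\<^bsub>N\<^esub> g n),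
     monoid.one = (\<lambda>n. \<one>\<^bsub>N\<^esub>),
     ring.zero = (\<lambda>n. \<zero>\<^bsub>N\<^esub>),
     ring.add = (\<lambda>f g n. f n \<oplus>\<^bsub>N\<^esub> g n),
     module.smult = (\<lambda>r f n. r \<odot>\<^bsub>N\<^esub> f n)\<rparr>"

text \<open>Action of x_i on Rees: x_i (v y^j) = (x_i v) y^(j + gamma_i).\<close>
definition rees_X :: "('r, 'a) module \<Rightarrow> (nat \<Rightarrow> 'a \<Rightarrow> 'a) \<Rightarrow> (nat \<Rightarrow> nat) \<Rightarrow> nat \<Rightarrow> (nat \<Rightarrow> 'a) \<Rightarrow> (nat \<Rightarrow> 'a)"
  where "rees_X N X \<gamma> i f = (\<lambda>n. if \<gamma> i \<le> n then X i (f (n - \<gamma> i)) else \<zero>\<^bsub>N\<^esub>)"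

text \<open>Action of y on Rees: y (v y^j) = v y^(j+1).\<close>
definition rees_Y :: "('r, 'a) module \<Rightarrow> (nat \<Rightarrow> 'a) \<Rightarrow> (nat \<Rightarrow> 'a)"
  where "rees_Y N f = (\<lambda>n. if 1 \<le> n then f (n - 1) else \<zero>\<^bsub>N\<^esub>)"

text \<open>The variables of S[y] = R[x_0..x_{k-1}, y] acting on Rees: index i<k is x_i, index k is y.\<close>
definition rees_ops :: "('r, 'a) module \<Rightarrow> nat \<Rightarrow> (nat \<Rightarrow> 'a \<Rightarrow> 'a) \<Rightarrow> (nat \<Rightarrow> nat) \<Rightarrow> nat \<Rightarrow> (nat \<Rightarrow> 'a) \<Rightarrow> (nat \<Rightarrow> 'a)"
  where "rees_ops N k X \<gamma> i = (if i < k then rees_X N X \<gamma> i else rees_Y N)"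

definition rees_component :: "('r, 'a) module \<Rightarrow> (nat \<Rightarrow> 'a set) \<Rightarrow> nat \<Rightarrow> (nat \<Rightarrow> 'a) set"
  where "rees_component N Nf n = {f \<in> carrier (rees N Nf). \<forall>m. m \<noteq> n \<longrightarrow> f m = \<zero>\<^bsub>N\<^esub>}"

definition poly_submodule :: "'r ring \<Rightarrow> ('r, 'a) module \<Rightarrow> nat \<Rightarrow> (nat \<Rightarrow> 'a \<Rightarrow> 'a) \<Rightarrow> 'a set \<Rightarrow> bool"
  where "poly_submodule R M m Y P \<longleftrightarrow> submodule P R M \<and> (\<forall>i<m. Y i ` P \<subseteq> P)"

definition poly_span :: "'r ring \<Rightarrow> ('r, 'a) module \<Rightarrow> nat \<Rightarrow> (nat \<Rightarrow> 'a \<Rightarrow> 'a) \<Rightarrow> 'a set \<Rightarrow> 'a set"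
  where "poly_span R M m Y G = \<Inter>{Q. poly_submodule R M m Y Q \<and> G \<subseteq> Q}"

definition noetherian_poly_module :: "'r ring \<Rightarrow> ('r, 'a) module \<Rightarrow> nat \<Rightarrow> (nat \<Rightarrow> 'a \<Rightarrow> 'a) \<Rightarrow> bool"
  where "noetherian_poly_module R M m Y \<longleftrightarrow>
     (\<forall>P. poly_submodule R M m Y P \<longrightarrow>
        (\<exists>G. finite G \<and> G \<subseteq> P \<and> P = poly_span R M m Y G))"

end

theory Submission
  imports Defs "HOL-Analysis.Measure_Space"
begin

(* The homogeneous component N_n y^n of Rees(N) is isomorphic to N_n, which gives the first claim.

   For the second, let y act on N as the identity raised in degree by 1: then Rees(N) carries k+1
   commuting homogeneous operators of positive degrees d_i. For graded submodules B <= A of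
   Rees(N) let h_{A,B}(n) = lambda(A_n) - lambda(B_n). By induction on the set V of operators that
   do not map A into B, (sum_n h_{A,B}(n) t^n) * prod_{i in V} (1 - t^{d_i}) is a polynomial.
   If V is empty, A is finitely generated and A/B is killed by all operators, so A_n = B_n for
   large n. Otherwise pick i in V and let K = {a in A. x_i a in B} and I = x_i A + B; the exact
   sequences 0 -> A_n -> A_n + B_{n+d_i} -> B_{n+d_i} -> 0 and 0 -> K_n -> A_n + B_{n+d_i} ->
   I_{n+d_i} -> 0 give h_{A,B}(n+d_i) - h_{A,B}(n) = h_{A,I}(n+d_i) - h_{K,B}(n), and the pairs
   (A, I) and (K, B) need one operator fewer. Finally take A = Rees(N) and B = 0. *)

section \<open>Submodules and length functions\<close>

lemma (in Module.module) submoduleI_smult: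
  assumes sub: "H \<subseteq> carrier M" and zero: "\<zero>\<^bsub>M\<^esub> \<in> H"
    and add: "\<And>a b. a \<in> H \<Longrightarrow> b \<in> H \<Longrightarrow> a \<oplus>\<^bsub>M\<^esub> b \<in> H"
    and smult: "\<And>r a. r \<in> carrier R \<Longrightarrow> a \<in> H \<Longrightarrow> r \<odot>\<^bsub>M\<^esub> a \<in> H"
  shows "submodule H R M"
proof (rule submoduleI[OF sub zero _ add smult])
  fix a assume a: "a \<in> H"
  then have "\<ominus>\<^bsub>M\<^esub> a = (\<ominus>\<^bsub>R\<^esub> \<one>\<^bsub>R\<^esub>) \<odot>\<^bsub>M\<^esub> a"
    using sub smult_l_minus[of "\<one>\<^bsub>R\<^esub>" a] by auto
  then show "\<ominus>\<^bsub>M\<^esub> a \<in> H" using smult[OF _ a] by simp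
qed

lemma (in Module.module) submodule_zero_closed: "submodule H R M \<Longrightarrow> \<zero>\<^bsub>M\<^esub> \<in> H"
  using subgroup.one_closed[OF submodule.axioms(1)] by fastforce

context
  fixes R :: "'r ring" and M :: "('r, 'a) module"
  assumes M: "Module.module R M"
begin

interpretation Module.module R M by (rule M)

lemma submodule_submod_iff:
  assumes P: "submodule P R M"
  shows "submodule Q R (submod M P) \<longleftrightarrow> submodule Q R M \<and> Q \<subseteq> P"
proof -
  have MP: "Module.module R (submod M P)"
    using submodule.submodule_is_module[OF P M] .
  show ?thesis
  proof
    assume Q: "submodule Q R (submod M P)"
    have QP: "Q \<subseteq> P" using module.submoduleE(1)[OF MP Q] by simp
    have "Module.module R (submod M Q)"
      using submodule.submodule_is_module[OF Q MP] by simp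
    then show "submodule Q R M \<and> Q \<subseteq> P"
      using QP submoduleE(1)[OF P] module_incl_imp_submodule by auto
  next
    assume Q: "submodule Q R M \<and> Q \<subseteq> P"
    then have "Module.module R (submod (submod M P) Q)"
      using submodule.submodule_is_module[OF _ M] by auto
    then show "submodule Q R (submod M P)"
      using module.module_incl_imp_submodule[OF MP] Q by simp
  qed
qed

lemma mod_span_submodule:
  assumes "G \<subseteq> carrier M"
  shows "submodule (mod_span R M G) R M"
proof -
  let ?F = "{Q. submodule Q R M \<and> G \<subseteq> Q}"
  have "carrier M \<in> ?F" using carrier_is_submodule assms by auto
  then show ?thesis
    unfolding mod_span_def
    by (intro submoduleI_smult) (auto intro: submodule.smult_closed
        subgroup.one_closed[OF submodule.axioms(1), simplified] submoduleE(5))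
qed

lemma mod_span_submod:
  assumes P: "submodule P R M" and G: "G \<subseteq> P"
  shows "mod_span R (submod M P) G = mod_span R M G"
proof -
  have span: "submodule (mod_span R M G) R M"
    using mod_span_submodule G submoduleE(1)[OF P] by auto
  have span_P: "mod_span R M G \<subseteq> P" unfolding mod_span_def using P G by auto
  have "mod_span R (submod M P) G = \<Inter>{Q. (submodule Q R M \<and> Q \<subseteq> P) \<and> G \<subseteq> Q}"
    unfolding mod_span_def using submodule_submod_iff[OF P] by simp
  also have "\<dots> = mod_span R M G"
    using span span_P by (intro antisym Inter_lower) (auto simp: mod_span_def)
  finally show ?thesis .
qed

lemma fin_gen_submodule_submod_iff:
  assumes P: "submodule P R M"
  shows "fin_gen_submodule R (submod M P) S \<longleftrightarrow> fin_gen_submodule R M S \<and> S \<subseteq> P"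
proof
  assume "fin_gen_submodule R (submod M P) S"
  then obtain G where S: "submodule S R (submod M P)" and G: "finite G" "G \<subseteq> P"
    and S_G: "S = mod_span R (submod M P) G"
    unfolding fin_gen_submodule_def by auto
  have "S = mod_span R M G" using S_G mod_span_submod[OF P G(2)] by simp
  moreover have "submodule S R M" "S \<subseteq> P" using S submodule_submod_iff[OF P] by simp_all
  moreover have "G \<subseteq> carrier M" using G(2) submoduleE(1)[OF P] by auto
  ultimately show "fin_gen_submodule R M S \<and> S \<subseteq> P"
    unfolding fin_gen_submodule_def using G(1) by blast
next
  assume "fin_gen_submodule R M S \<and> S \<subseteq> P"
  then obtain G where S: "submodule S R M" "S \<subseteq> P" and G: "finite G"
    and S_G: "S = mod_span R M G"
    unfolding fin_gen_submodule_def by auto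
  have G_P: "G \<subseteq> P" using S_G S(2) unfolding mod_span_def by auto
  have "S = mod_span R (submod M P) G" using S_G mod_span_submod[OF P G_P] by simp
  moreover have "submodule S R (submod M P)" using S submodule_submod_iff[OF P] by simp
  ultimately show "fin_gen_submodule R (submod M P) S"
    unfolding fin_gen_submodule_def using G G_P by auto
qed

end

lemma length_function_zero_submodule:
  assumes "length_function R lam" and "Module.module R M"
  shows "lam (submod M {\<zero>\<^bsub>M\<^esub>}) = 0"
proof -
  interpret Module.module R M by fact
  have "submodule {\<zero>\<^bsub>M\<^esub>} R M" by (rule submoduleI_smult) auto
  then have "Module.module R (submod M {\<zero>\<^bsub>M\<^esub>})"
    using submodule.submodule_is_module assms(2) by blast
  then show ?thesis using assms(1) unfolding length_function_def by auto
qed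

lemma length_function_mono:
  assumes lam: "length_function R lam" and M: "Module.module R M"
    and P: "submodule P R M" and Q: "submodule Q R M" and PQ: "P \<subseteq> Q"
  shows "lam (submod M P) \<le> lam (submod M Q)"
proof -
  interpret Module.module R M by (rule M)
  have sup: "lam (submod M T) = (SUP S\<in>{S. fin_gen_submodule R M S \<and> S \<subseteq> T}. lam (submod M S))"
    if T: "submodule T R M" for T
  proof -
    have "{S. fin_gen_submodule R (submod M T) S} = {S. fin_gen_submodule R M S \<and> S \<subseteq> T}"
      using fin_gen_submodule_submod_iff[OF M T] by blast
    then show ?thesis
      using lam submodule.submodule_is_module[OF T M] unfolding length_function_def by simp
  qed
  show ?thesis
    unfolding sup[OF P] sup[OF Q] using PQ by (intro SUP_subset_mono) auto
qed

lemma length_function_exact: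
  assumes lam: "length_function R lam" and M: "Module.module R M"
    and P: "submodule P R M" and Q: "submodule Q R M" and S: "submodule S R M"
    and f: "mod_hom R (submod M P) (submod M Q) f" and g: "mod_hom R (submod M Q) (submod M S) g"
    and inj: "inj_on f P" and surj: "g ` Q = S" and ker: "f ` P = {x \<in> Q. g x = \<zero>\<^bsub>M\<^esub>}"
  shows "lam (submod M Q) = lam (submod M P) + lam (submod M S)"
proof -
  have exact: "\<And>A B C f g. Module.module R A \<Longrightarrow> Module.module R B \<Longrightarrow> Module.module R C \<Longrightarrow>
      mod_hom R A B f \<Longrightarrow> mod_hom R B C g \<Longrightarrow> inj_on f (carrier A) \<Longrightarrow>
      g ` carrier B = carrier C \<Longrightarrow> f ` carrier A = {x \<in> carrier B. g x = \<zero>\<^bsub>C\<^esub>} \<Longrightarrow>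
      lam B = lam A + lam C"
    using lam unfolding length_function_def by blast
  show ?thesis
    by (rule exact[OF submodule.submodule_is_module[OF P M] submodule.submodule_is_module[OF Q M]
          submodule.submodule_is_module[OF S M] f g]) (use inj surj ker in simp_all)
qed

section \<open>Power series with polynomial numerators\<close>

lemma fps_eventually_zero_is_poly:
  assumes "\<And>n. n > D \<Longrightarrow> c n = 0"
  shows "\<exists>p. Abs_fps c = fps_of_poly p"
  using coeff_Abs_poly[of D c] assms by (auto simp: fps_of_poly_def intro!: exI[of _ "Abs_poly c"])

lemma prod_one_minus_fps_X_power_is_poly:
  "\<exists>p. (\<Prod>j\<in>V. 1 - fps_X ^ e j :: 'a :: comm_ring_1 fps) = fps_of_poly p"
  by (rule exI[of _ "\<Prod>j\<in>V. 1 - monom 1 (e j)"])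
    (simp add: fps_of_poly_prod fps_of_poly_diff fps_of_poly_monom')

lemma fps_one_minus_X_power_recurrence:
  fixes h h1 h2 :: "nat \<Rightarrow> 'a :: comm_ring_1"
  assumes rec: "\<And>n. h (n + e) - h n = h1 (n + e) - h2 n"
  shows "\<exists>q. Abs_fps h * (1 - fps_X ^ e) = Abs_fps h1 - fps_X ^ e * Abs_fps h2 + fps_of_poly q"
proof -
  \<comment> \<open>the recurrence says nothing about the first e coefficients; they make up q\<close>
  define c where "c n = (if n < e then h n - h1 n else 0)" for n
  obtain q where q: "Abs_fps c = fps_of_poly q"
    using fps_eventually_zero_is_poly[of e c] by (auto simp: c_def)
  have "Abs_fps h * (1 - fps_X ^ e) = Abs_fps h1 - fps_X ^ e * Abs_fps h2 + Abs_fps c"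
  proof (rule fps_ext)
    fix n
    show "fps_nth (Abs_fps h * (1 - fps_X ^ e)) n
        = fps_nth (Abs_fps h1 - fps_X ^ e * Abs_fps h2 + Abs_fps c) n"
    proof (cases "n < e")
      case False
      then obtain j where "n = j + e" by (metis add.commute le_Suc_ex not_less)
      then show ?thesis using rec[of j]
        by (simp add: right_diff_distrib fps_X_power_mult_right_nth fps_X_power_mult_nth c_def)
    qed (simp add: right_diff_distrib fps_X_power_mult_right_nth fps_X_power_mult_nth c_def)
  qed
  then show ?thesis using q by auto
qed

lemma fps_recurrence_times_poly:
  fixes h h1 h2 :: "nat \<Rightarrow> 'a :: comm_ring_1"
  assumes rec: "\<And>n. h (n + e) - h n = h1 (n + e) - h2 n"
    and p1: "Abs_fps h1 * fps_of_poly q = fps_of_poly p1"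
    and p2: "Abs_fps h2 * fps_of_poly q = fps_of_poly p2"
  shows "\<exists>p. Abs_fps h * ((1 - fps_X ^ e) * fps_of_poly q) = fps_of_poly p"
proof -
  obtain r where r: "Abs_fps h * (1 - fps_X ^ e) = Abs_fps h1 - fps_X ^ e * Abs_fps h2 + fps_of_poly r"
    using fps_one_minus_X_power_recurrence[of h e h1 h2, OF rec] by blast
  have "Abs_fps h * ((1 - fps_X ^ e) * fps_of_poly q)
      = Abs_fps h1 * fps_of_poly q - fps_X ^ e * (Abs_fps h2 * fps_of_poly q) + fps_of_poly r * fps_of_poly q"
    by (simp only: mult.assoc[symmetric] r) (simp add: algebra_simps)
  also have "\<dots> = fps_of_poly (p1 - monom 1 e * p2 + r * q)"
    by (simp add: p1 p2 fps_of_poly_diff fps_of_poly_add fps_of_poly_mult fps_of_poly_monom')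
  finally show ?thesis by blast
qed

section \<open>The Rees module\<close>

locale filtered_module =
  fixes R :: "'r ring" and N :: "('r, 'm) module" and Nf :: "nat \<Rightarrow> 'm set"
  assumes module_N: "Module.module R N"
    and submodule_Nf: "submodule (Nf n) R N"
begin

sublocale N: Module.module R N by (rule module_N)

abbreviation M where "M \<equiv> rees N Nf"
abbreviation z where "z \<equiv> \<zero>\<^bsub>N\<^esub>"

lemma Nf_carrier: "x \<in> Nf n \<Longrightarrow> x \<in> carrier N"
  using N.submoduleE(1)[OF submodule_Nf] by auto

lemma Nf_zero: "z \<in> Nf n"
  using N.submodule_zero_closed[OF submodule_Nf] .

lemma Nf_add: "x \<in> Nf n \<Longrightarrow> y \<in> Nf n \<Longrightarrow> x \<oplus>\<^bsub>N\<^esub> y \<in> Nf n"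
  using N.submoduleE(5)[OF submodule_Nf] by auto

lemma Nf_neg: "x \<in> Nf n \<Longrightarrow> \<ominus>\<^bsub>N\<^esub> x \<in> Nf n"
  using N.submoduleE(3)[OF submodule_Nf] by auto

lemma Nf_smult: "r \<in> carrier R \<Longrightarrow> x \<in> Nf n \<Longrightarrow> r \<odot>\<^bsub>N\<^esub> x \<in> Nf n"
  using N.submoduleE(4)[OF submodule_Nf] by auto

lemma neg_zero: "\<ominus>\<^bsub>N\<^esub> z = z"
  using N.add.inv_one by simp

lemma rees_carrier_iff: "f \<in> carrier M \<longleftrightarrow> (\<forall>n. f n \<in> Nf n) \<and> finite {n. f n \<noteq> z}"
  by (simp add: rees_def)

lemma rees_add: "f \<oplus>\<^bsub>M\<^esub> g = (\<lambda>n. f n \<oplus>\<^bsub>N\<^esub> g n)"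
  by (simp add: rees_def)

lemma rees_zero: "\<zero>\<^bsub>M\<^esub> = (\<lambda>n. z)"
  by (simp add: rees_def)

lemma rees_smult: "r \<odot>\<^bsub>M\<^esub> f = (\<lambda>n. r \<odot>\<^bsub>N\<^esub> f n)"
  by (simp add: rees_def)

lemma rees_carrier_Nf: "f \<in> carrier M \<Longrightarrow> f n \<in> Nf n"
  using rees_carrier_iff by blast

lemma rees_carrier_N: "f \<in> carrier M \<Longrightarrow> f n \<in> carrier N"
  using rees_carrier_Nf Nf_carrier by blast

lemma rees_carrier_pointwise:
  assumes "\<And>n. f n \<in> Nf n" and "{n. f n \<noteq> z} \<subseteq> S" and "finite S"
  shows "f \<in> carrier M"
  using assms finite_subset unfolding rees_carrier_iff by blast

lemma rees_add_closed: "f \<in> carrier M \<Longrightarrow> g \<in> carrier M \<Longrightarrow> f \<oplus>\<^bsub>M\<^esub> g \<in> carrier M"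
  by (rule rees_carrier_pointwise[where S = "{n. f n \<noteq> z} \<union> {n. g n \<noteq> z}"])
    (auto simp: rees_add rees_carrier_iff Nf_add rees_carrier_N)

lemma rees_smult_closed: "r \<in> carrier R \<Longrightarrow> f \<in> carrier M \<Longrightarrow> r \<odot>\<^bsub>M\<^esub> f \<in> carrier M"
  by (rule rees_carrier_pointwise[where S = "{n. f n \<noteq> z}"])
    (auto simp: rees_smult rees_carrier_iff Nf_smult)

lemma rees_neg_closed: "f \<in> carrier M \<Longrightarrow> (\<lambda>n. \<ominus>\<^bsub>N\<^esub> f n) \<in> carrier M"
  by (rule rees_carrier_pointwise[where S = "{n. f n \<noteq> z}"])
    (auto simp: rees_carrier_iff Nf_neg)

lemma rees_zero_closed: "\<zero>\<^bsub>M\<^esub> \<in> carrier M"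
  by (simp add: rees_zero rees_carrier_iff Nf_zero)

lemma rees_module: "Module.module R M"
proof (rule moduleI)
  show "cring R" using N.is_cring .
  show "abelian_group M"
  proof (rule abelian_groupI)
    fix x y assume "x \<in> carrier M" "y \<in> carrier M"
    then show "x \<oplus>\<^bsub>M\<^esub> y \<in> carrier M" by (rule rees_add_closed)
  next
    show "\<zero>\<^bsub>M\<^esub> \<in> carrier M" by (rule rees_zero_closed)
  next
    fix x y w assume "x \<in> carrier M" "y \<in> carrier M" "w \<in> carrier M"
    then show "x \<oplus>\<^bsub>M\<^esub> y \<oplus>\<^bsub>M\<^esub> w = x \<oplus>\<^bsub>M\<^esub> (y \<oplus>\<^bsub>M\<^esub> w)"
      by (auto intro!: ext simp: rees_add rees_carrier_N N.a_assoc)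
  next
    fix x y assume "x \<in> carrier M" "y \<in> carrier M"
    then show "x \<oplus>\<^bsub>M\<^esub> y = y \<oplus>\<^bsub>M\<^esub> x"
      by (auto intro!: ext simp: rees_add rees_carrier_N N.a_comm)
  next
    fix x assume x: "x \<in> carrier M"
    then show "\<zero>\<^bsub>M\<^esub> \<oplus>\<^bsub>M\<^esub> x = x"
      by (auto intro!: ext simp: rees_add rees_zero rees_carrier_N)
    show "\<exists>y\<in>carrier M. y \<oplus>\<^bsub>M\<^esub> x = \<zero>\<^bsub>M\<^esub>"
      using rees_neg_closed[OF x] x unfolding rees_add rees_zero
      by (intro bexI[of _ "\<lambda>n. \<ominus>\<^bsub>N\<^esub> x n"]) (auto intro!: ext simp: rees_carrier_N N.l_neg)
  qed
next
  fix a x assume "a \<in> carrier R" "x \<in> carrier M"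
  then show "a \<odot>\<^bsub>M\<^esub> x \<in> carrier M" by (rule rees_smult_closed)
qed (auto intro!: ext simp: rees_add rees_smult rees_carrier_N
    N.smult_l_distr N.smult_r_distr N.smult_assoc1)

sublocale Rees: Module.module R M by (rule rees_module)

lemma rees_neg: "f \<in> carrier M \<Longrightarrow> \<ominus>\<^bsub>M\<^esub> f = (\<lambda>n. \<ominus>\<^bsub>N\<^esub> f n)"
  by (rule Rees.minus_equality)
    (auto intro!: ext simp: rees_add rees_zero rees_carrier_N N.l_neg rees_neg_closed)

definition homog_comp :: "nat \<Rightarrow> (nat \<Rightarrow> 'm) \<Rightarrow> (nat \<Rightarrow> 'm)" where
  "homog_comp n f = (\<lambda>j. if j = n then f n else z)"

definition degree_part :: "(nat \<Rightarrow> 'm) set \<Rightarrow> nat \<Rightarrow> (nat \<Rightarrow> 'm) set" where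
  "degree_part P n = {f \<in> P. \<forall>j. j \<noteq> n \<longrightarrow> f j = z}"

lemma rees_component_eq: "rees_component N Nf n = degree_part (carrier M) n"
  by (simp add: rees_component_def degree_part_def)

lemma homog_comp_closed: "f \<in> carrier M \<Longrightarrow> homog_comp n f \<in> carrier M"
  by (rule rees_carrier_pointwise[where S = "{n}"])
    (auto simp: homog_comp_def rees_carrier_Nf Nf_zero)

lemma homog_comp_add: "homog_comp n (f \<oplus>\<^bsub>M\<^esub> g) = homog_comp n f \<oplus>\<^bsub>M\<^esub> homog_comp n g"
  by (auto simp: homog_comp_def rees_add)

lemma homog_comp_smult: "r \<in> carrier R \<Longrightarrow> homog_comp n (r \<odot>\<^bsub>M\<^esub> f) = r \<odot>\<^bsub>M\<^esub> homog_comp n f"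
  by (auto simp: homog_comp_def rees_smult)

lemma homog_comp_zero: "homog_comp n \<zero>\<^bsub>M\<^esub> = \<zero>\<^bsub>M\<^esub>"
  by (auto simp: homog_comp_def rees_zero)

lemma homog_comp_neg: "f \<in> carrier M \<Longrightarrow> homog_comp n (\<ominus>\<^bsub>M\<^esub> f) = \<ominus>\<^bsub>M\<^esub> homog_comp n f"
  by (auto intro!: ext simp: homog_comp_def rees_neg homog_comp_closed[unfolded homog_comp_def] neg_zero)

lemma homog_comp_homog_comp:
  "homog_comp j (homog_comp n f) = (if j = n then homog_comp n f else \<zero>\<^bsub>M\<^esub>)"
  by (auto simp: homog_comp_def rees_zero)

lemma homog_comp_eq_zero_iff: "homog_comp n f = \<zero>\<^bsub>M\<^esub> \<longleftrightarrow> f n = z"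
  by (auto simp: homog_comp_def rees_zero fun_eq_iff)

lemma degree_part_iff:
  "f \<in> degree_part P n \<longleftrightarrow> f \<in> P \<and> (\<forall>j. j \<noteq> n \<longrightarrow> homog_comp j f = \<zero>\<^bsub>M\<^esub>)"
  by (auto simp: degree_part_def homog_comp_eq_zero_iff)

lemma homog_comp_degree_part:
  "f \<in> degree_part P n \<Longrightarrow> homog_comp j f = (if j = n then f else \<zero>\<^bsub>M\<^esub>)"
  by (auto simp: homog_comp_def rees_zero degree_part_def)

lemma degree_part_submodule: "submodule P R M \<Longrightarrow> submodule (degree_part P n) R M"
  using Rees.submoduleE[of P] Rees.submodule_zero_closed[of P]
  by (intro Rees.submoduleI_smult) (auto simp: degree_part_def rees_zero rees_add rees_smult)

lemma rees_degree_part_iso: "mod_iso R (submod N (Nf n)) (submod M (degree_part (carrier M) n))"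
proof -
  define f where "f v = (\<lambda>j. if j = n then v else z)" for v
  have f_into: "f v \<in> degree_part (carrier M) n" if "v \<in> Nf n" for v
    using that by (auto simp: degree_part_def f_def Nf_zero split: if_splits
        intro!: rees_carrier_pointwise[where S = "{n}"])
  have "f ` Nf n = degree_part (carrier M) n"
  proof (intro equalityI subsetI)
    fix g assume g: "g \<in> degree_part (carrier M) n"
    then have "g = f (g n)" by (auto simp: degree_part_def f_def)
    with g show "g \<in> f ` Nf n" by (auto simp: degree_part_def rees_carrier_Nf)
  qed (use f_into in auto)
  moreover have "inj_on f (Nf n)" by (rule inj_onI) (metis f_def)
  moreover have "mod_hom R (submod N (Nf n)) (submod M (degree_part (carrier M) n)) f"
    unfolding mod_hom_def using f_into Nf_carrier by (auto simp: rees_add rees_smult f_def)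
  ultimately show ?thesis unfolding mod_iso_def bij_betw_def by (auto intro!: exI[of _ f])
qed

lemma length_compatible_rees_component:
  assumes "length_compatible R lam1 lam2"
  shows "lam1 (submod N (Nf n)) = lam2 (submod M (rees_component N Nf n))"
  using assms rees_degree_part_iso submodule.submodule_is_module[OF submodule_Nf module_N]
    submodule.submodule_is_module[OF degree_part_submodule[OF Rees.carrier_is_submodule] rees_module]
  unfolding length_compatible_def rees_component_eq by blast

text \<open>The submodule A_n + B_n' of Rees(N); it is a direct sum when n and n' differ.\<close>

definition sum_part :: "(nat \<Rightarrow> 'm) set \<Rightarrow> nat \<Rightarrow> (nat \<Rightarrow> 'm) set \<Rightarrow> nat \<Rightarrow> (nat \<Rightarrow> 'm) set" where
  "sum_part A n B n' = {x \<in> carrier M. homog_comp n x \<in> A \<and> homog_comp n' x \<in> B \<and>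
     (\<forall>j. j \<noteq> n \<and> j \<noteq> n' \<longrightarrow> homog_comp j x = \<zero>\<^bsub>M\<^esub>)}"

lemma sum_part_submodule:
  assumes "submodule A R M" and "submodule B R M"
  shows "submodule (sum_part A n B n') R M"
  using Rees.submoduleE(4,5)[OF assms(1)] Rees.submoduleE(4,5)[OF assms(2)]
    Rees.submodule_zero_closed[OF assms(1)] Rees.submodule_zero_closed[OF assms(2)]
  by (intro Rees.submoduleI_smult) (auto simp: sum_part_def rees_zero_closed homog_comp_zero
      rees_add_closed rees_smult_closed homog_comp_add homog_comp_smult)

lemma sum_part_decompose:
  assumes "x \<in> sum_part A n B n'" and "n \<noteq> n'"
  shows "x = homog_comp n x \<oplus>\<^bsub>M\<^esub> homog_comp n' x"
proof (rule ext)
  fix j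
  show "x j = (homog_comp n x \<oplus>\<^bsub>M\<^esub> homog_comp n' x) j"
    using assms rees_carrier_N[of x j] unfolding sum_part_def homog_comp_eq_zero_iff
    by (auto simp: rees_add homog_comp_def)
qed

lemma degree_part_in_sum_part:
  assumes A: "submodule A R M" and B: "submodule B R M" and "n \<noteq> n'"
  shows "degree_part A n \<subseteq> sum_part A n B n'" and "degree_part B n' \<subseteq> sum_part A n B n'"
proof safe
  fix x assume x: "x \<in> degree_part A n"
  then show "x \<in> sum_part A n B n'"
    using homog_comp_degree_part[OF x] Rees.submoduleE(1)[OF A] Rees.submodule_zero_closed[OF B]
      \<open>n \<noteq> n'\<close> by (auto simp: sum_part_def degree_part_def)
next
  fix x assume x: "x \<in> degree_part B n'"
  then show "x \<in> sum_part A n B n'"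
    using homog_comp_degree_part[OF x] Rees.submoduleE(1)[OF B] Rees.submodule_zero_closed[OF A]
      \<open>n \<noteq> n'\<close> by (auto simp: sum_part_def degree_part_def)
qed

lemma length_sum_part:
  assumes lam: "length_function R lam" and A: "submodule A R M" and B: "submodule B R M"
    and n: "n \<noteq> n'"
  shows "lam (submod M (sum_part A n B n'))
    = lam (submod M (degree_part A n)) + lam (submod M (degree_part B n'))"
proof (rule length_function_exact[OF lam rees_module degree_part_submodule[OF A]
      sum_part_submodule[OF A B] degree_part_submodule[OF B]])
  note in_sum = degree_part_in_sum_part[OF A B n]
  have proj: "homog_comp n' x \<in> degree_part B n'" if "x \<in> sum_part A n B n'" for x
    using that by (auto simp: sum_part_def degree_part_iff homog_comp_homog_comp)
  show "mod_hom R (submod M (degree_part A n)) (submod M (sum_part A n B n')) id"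
    using in_sum by (auto simp: mod_hom_def)
  show "mod_hom R (submod M (sum_part A n B n')) (submod M (degree_part B n')) (homog_comp n')"
    using proj by (auto simp: mod_hom_def homog_comp_add homog_comp_smult)
  show "inj_on id (degree_part A n)" by simp
  show "homog_comp n' ` sum_part A n B n' = degree_part B n'"
    using proj in_sum(2) homog_comp_degree_part by (auto intro!: image_eqI)
  show "id ` degree_part A n = {x \<in> sum_part A n B n'. homog_comp n' x = \<zero>\<^bsub>M\<^esub>}"
  proof (intro equalityI subsetI)
    fix x assume "x \<in> {x \<in> sum_part A n B n'. homog_comp n' x = \<zero>\<^bsub>M\<^esub>}"
    then have x: "x \<in> sum_part A n B n'" and x_n': "homog_comp n' x = \<zero>\<^bsub>M\<^esub>" by auto
    have "x = homog_comp n x \<oplus>\<^bsub>M\<^esub> homog_comp n' x" by (rule sum_part_decompose[OF x n])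
    also have "\<dots> = homog_comp n x"
      using x x_n' homog_comp_closed by (simp add: sum_part_def)
    finally have x_eq: "x = homog_comp n x" .
    have "homog_comp n x \<in> degree_part A n"
      using x homog_comp_homog_comp[of _ n x] by (auto simp: sum_part_def degree_part_iff)
    then show "x \<in> id ` degree_part A n" using x_eq[symmetric] by simp
  qed (use in_sum(1) n in \<open>auto simp: homog_comp_degree_part\<close>)
qed

end

section \<open>Homogeneous operators on the Rees module\<close>

locale homogeneous_operators = filtered_module R N Nf
  for R :: "'r ring" and N :: "('r, 'm) module" and Nf +
  fixes m :: nat and Y :: "nat \<Rightarrow> 'm \<Rightarrow> 'm" and d :: "nat \<Rightarrow> nat"
  assumes Y_hom: "i < m \<Longrightarrow> mod_hom R N N (Y i)"
    and Y_comm: "i < m \<Longrightarrow> j < m \<Longrightarrow> v \<in> carrier N \<Longrightarrow> Y i (Y j v) = Y j (Y i v)"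
    and Y_Nf: "i < m \<Longrightarrow> x \<in> Nf j \<Longrightarrow> Y i x \<in> Nf (j + d i)"
begin

definition act :: "nat \<Rightarrow> (nat \<Rightarrow> 'm) \<Rightarrow> (nat \<Rightarrow> 'm)" where
  "act i f = (\<lambda>n. if d i \<le> n then Y i (f (n - d i)) else z)"

lemma Y_carrier: "i < m \<Longrightarrow> x \<in> carrier N \<Longrightarrow> Y i x \<in> carrier N"
  using Y_hom unfolding mod_hom_def by auto

lemma Y_add: "i < m \<Longrightarrow> x \<in> carrier N \<Longrightarrow> y \<in> carrier N \<Longrightarrow> Y i (x \<oplus>\<^bsub>N\<^esub> y) = Y i x \<oplus>\<^bsub>N\<^esub> Y i y"
  using Y_hom unfolding mod_hom_def by auto

lemma Y_smult: "i < m \<Longrightarrow> r \<in> carrier R \<Longrightarrow> x \<in> carrier N \<Longrightarrow> Y i (r \<odot>\<^bsub>N\<^esub> x) = r \<odot>\<^bsub>N\<^esub> Y i x"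
  using Y_hom unfolding mod_hom_def by auto

lemma Y_zero: "i < m \<Longrightarrow> Y i z = z"
  using Y_smult[of i "\<zero>\<^bsub>R\<^esub>" z] Y_carrier[of i z] by simp

lemma act_closed:
  assumes i: "i < m" and f: "f \<in> carrier M"
  shows "act i f \<in> carrier M"
proof (rule rees_carrier_pointwise[where S = "(\<lambda>j. j + d i) ` {n. f n \<noteq> z}"])
  show "act i f n \<in> Nf n" for n
    using Y_Nf[OF i rees_carrier_Nf[OF f, of "n - d i"]] Nf_zero by (auto simp: act_def)
  show "{n. act i f n \<noteq> z} \<subseteq> (\<lambda>j. j + d i) ` {n. f n \<noteq> z}"
  proof
    fix n assume "n \<in> {n. act i f n \<noteq> z}"
    then have "d i \<le> n" "f (n - d i) \<noteq> z" using Y_zero[OF i] by (auto simp: act_def split: if_splits)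
    then show "n \<in> (\<lambda>j. j + d i) ` {n. f n \<noteq> z}" by (intro image_eqI[of _ _ "n - d i"]) auto
  qed
  show "finite ((\<lambda>j. j + d i) ` {n. f n \<noteq> z})" using f rees_carrier_iff by auto
qed

lemma act_add:
  "i < m \<Longrightarrow> f \<in> carrier M \<Longrightarrow> g \<in> carrier M \<Longrightarrow> act i (f \<oplus>\<^bsub>M\<^esub> g) = act i f \<oplus>\<^bsub>M\<^esub> act i g"
  by (auto simp: act_def rees_add Y_add rees_carrier_N)

lemma act_smult: "i < m \<Longrightarrow> r \<in> carrier R \<Longrightarrow> f \<in> carrier M \<Longrightarrow> act i (r \<odot>\<^bsub>M\<^esub> f) = r \<odot>\<^bsub>M\<^esub> act i f"
  by (auto simp: act_def rees_smult Y_smult rees_carrier_N)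

lemma act_zero: "i < m \<Longrightarrow> act i \<zero>\<^bsub>M\<^esub> = \<zero>\<^bsub>M\<^esub>"
  by (auto simp: act_def rees_zero Y_zero)

lemma act_comm: "i < m \<Longrightarrow> j < m \<Longrightarrow> f \<in> carrier M \<Longrightarrow> act i (act j f) = act j (act i f)"
  by (auto intro!: ext simp: act_def Y_comm rees_carrier_N Y_zero add.commute diff_diff_add)

lemma homog_comp_act:
  "i < m \<Longrightarrow> homog_comp j (act i f) = (if d i \<le> j then act i (homog_comp (j - d i) f) else \<zero>\<^bsub>M\<^esub>)"
  by (auto intro!: ext simp: homog_comp_def act_def rees_zero Y_zero)

lemma homog_comp_act_degree_part:
  "i < m \<Longrightarrow> a \<in> degree_part P n \<Longrightarrow> homog_comp j (act i a) = (if j = n + d i then act i a else \<zero>\<^bsub>M\<^esub>)"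
  by (cases "d i \<le> j") (auto simp: homog_comp_act homog_comp_degree_part act_zero)

definition graded_submodule :: "(nat \<Rightarrow> 'm) set \<Rightarrow> bool" where
  "graded_submodule P \<longleftrightarrow> poly_submodule R M m act P \<and> (\<forall>f\<in>P. \<forall>n. homog_comp n f \<in> P)"

definition colon :: "(nat \<Rightarrow> 'm) set \<Rightarrow> (nat \<Rightarrow> 'm) set \<Rightarrow> nat \<Rightarrow> (nat \<Rightarrow> 'm) set" where
  "colon A B i = {a \<in> A. act i a \<in> B}"

definition act_sum :: "(nat \<Rightarrow> 'm) set \<Rightarrow> (nat \<Rightarrow> 'm) set \<Rightarrow> nat \<Rightarrow> (nat \<Rightarrow> 'm) set" where
  "act_sum A B i = {act i a \<oplus>\<^bsub>M\<^esub> b | a b. a \<in> A \<and> b \<in> B}"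

context
  fixes P assumes P: "graded_submodule P"
begin

lemma graded_submodule_submodule: "submodule P R M"
  using P by (simp add: graded_submodule_def poly_submodule_def)

lemma graded_submodule_carrier: "x \<in> P \<Longrightarrow> x \<in> carrier M"
  using Rees.submoduleE(1)[OF graded_submodule_submodule] by auto

lemma graded_submodule_zero: "\<zero>\<^bsub>M\<^esub> \<in> P"
  using Rees.submodule_zero_closed[OF graded_submodule_submodule] .

lemma graded_submodule_add: "x \<in> P \<Longrightarrow> y \<in> P \<Longrightarrow> x \<oplus>\<^bsub>M\<^esub> y \<in> P"
  using Rees.submoduleE(5)[OF graded_submodule_submodule] by auto

lemma graded_submodule_neg: "x \<in> P \<Longrightarrow> \<ominus>\<^bsub>M\<^esub> x \<in> P"
  using Rees.submoduleE(3)[OF graded_submodule_submodule] by auto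

lemma graded_submodule_smult: "r \<in> carrier R \<Longrightarrow> x \<in> P \<Longrightarrow> r \<odot>\<^bsub>M\<^esub> x \<in> P"
  using Rees.submoduleE(4)[OF graded_submodule_submodule] by auto

lemma graded_submodule_act: "i < m \<Longrightarrow> x \<in> P \<Longrightarrow> act i x \<in> P"
  using P by (auto simp: graded_submodule_def poly_submodule_def)

lemma graded_submodule_homog_comp: "x \<in> P \<Longrightarrow> homog_comp n x \<in> P"
  using P by (auto simp: graded_submodule_def)

end

lemma graded_submoduleI:
  assumes "P \<subseteq> carrier M" "\<zero>\<^bsub>M\<^esub> \<in> P"
    "\<And>x y. x \<in> P \<Longrightarrow> y \<in> P \<Longrightarrow> x \<oplus>\<^bsub>M\<^esub> y \<in> P"
    "\<And>r x. r \<in> carrier R \<Longrightarrow> x \<in> P \<Longrightarrow> r \<odot>\<^bsub>M\<^esub> x \<in> P"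
    "\<And>i x. i < m \<Longrightarrow> x \<in> P \<Longrightarrow> act i x \<in> P"
    "\<And>n x. x \<in> P \<Longrightarrow> homog_comp n x \<in> P"
  shows "graded_submodule P"
  unfolding graded_submodule_def poly_submodule_def
  using Rees.submoduleI_smult[OF assms(1-4)] assms(5,6) by blast

lemma graded_submodule_rees: "graded_submodule (carrier M)"
  by (rule graded_submoduleI)
    (auto simp: rees_zero_closed rees_add_closed rees_smult_closed act_closed homog_comp_closed)

lemma graded_submodule_trivial: "graded_submodule {\<zero>\<^bsub>M\<^esub>}"
  by (rule graded_submoduleI) (auto simp: rees_zero_closed homog_comp_zero act_zero)

context
  fixes A B i
  assumes A: "graded_submodule A" and B: "graded_submodule B" and i: "i < m"
begin

lemma graded_submodule_colon: "graded_submodule (colon A B i)"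
proof (rule graded_submoduleI)
  fix n x assume x: "x \<in> colon A B i"
  have "act i (homog_comp n x) = homog_comp (n + d i) (act i x)" by (simp add: homog_comp_act i)
  then show "homog_comp n x \<in> colon A B i"
    using x graded_submodule_homog_comp[OF A] graded_submodule_homog_comp[OF B] by (auto simp: colon_def)
qed (use graded_submodule_carrier[OF A] graded_submodule_zero[OF A] graded_submodule_zero[OF B]
      graded_submodule_add[OF A] graded_submodule_add[OF B] graded_submodule_smult[OF A]
      graded_submodule_smult[OF B] graded_submodule_act[OF A] graded_submodule_act[OF B]
      act_zero[OF i] act_add[OF i] act_smult[OF i] act_comm[OF i] in \<open>auto simp: colon_def\<close>)

lemma graded_submodule_act_sum: "graded_submodule (act_sum A B i)"
proof (rule graded_submoduleI)
  show "act_sum A B i \<subseteq> carrier M"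
    using act_closed[OF i] graded_submodule_carrier[OF A] graded_submodule_carrier[OF B] by (auto simp: act_sum_def)
  show "\<zero>\<^bsub>M\<^esub> \<in> act_sum A B i"
    using graded_submodule_zero[OF A] graded_submodule_zero[OF B] act_zero[OF i]
    by (auto simp: act_sum_def intro!: exI[of _ "\<zero>\<^bsub>M\<^esub>"])
next
  fix x y assume "x \<in> act_sum A B i" "y \<in> act_sum A B i"
  then obtain a b a' b' where ab: "a \<in> A" "b \<in> B" "a' \<in> A" "b' \<in> B"
    and x: "x = act i a \<oplus>\<^bsub>M\<^esub> b" and y: "y = act i a' \<oplus>\<^bsub>M\<^esub> b'" by (auto simp: act_sum_def)
  have "x \<oplus>\<^bsub>M\<^esub> y = act i (a \<oplus>\<^bsub>M\<^esub> a') \<oplus>\<^bsub>M\<^esub> (b \<oplus>\<^bsub>M\<^esub> b')"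
    using ab graded_submodule_carrier[OF A] graded_submodule_carrier[OF B] act_closed[OF i] by (simp add: x y act_add[OF i] Rees.a_ac)
  then show "x \<oplus>\<^bsub>M\<^esub> y \<in> act_sum A B i"
    using ab graded_submodule_add[OF A] graded_submodule_add[OF B] unfolding act_sum_def by blast
next
  fix r x assume r: "r \<in> carrier R" and "x \<in> act_sum A B i"
  then obtain a b where ab: "a \<in> A" "b \<in> B" and x: "x = act i a \<oplus>\<^bsub>M\<^esub> b" by (auto simp: act_sum_def)
  have "r \<odot>\<^bsub>M\<^esub> x = act i (r \<odot>\<^bsub>M\<^esub> a) \<oplus>\<^bsub>M\<^esub> (r \<odot>\<^bsub>M\<^esub> b)"
    using ab graded_submodule_carrier[OF A] graded_submodule_carrier[OF B] act_closed[OF i] r by (simp add: x act_smult[OF i] Rees.smult_r_distr)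
  then show "r \<odot>\<^bsub>M\<^esub> x \<in> act_sum A B i"
    using ab r graded_submodule_smult[OF A] graded_submodule_smult[OF B] unfolding act_sum_def by blast
next
  fix j x assume j: "j < m" and "x \<in> act_sum A B i"
  then obtain a b where ab: "a \<in> A" "b \<in> B" and x: "x = act i a \<oplus>\<^bsub>M\<^esub> b" by (auto simp: act_sum_def)
  have "act j x = act i (act j a) \<oplus>\<^bsub>M\<^esub> act j b"
    using ab graded_submodule_carrier[OF A] graded_submodule_carrier[OF B] act_closed[OF i] by (simp add: x act_add[OF j] act_comm[OF i j])
  then show "act j x \<in> act_sum A B i"
    using ab graded_submodule_act[OF A j] graded_submodule_act[OF B j] unfolding act_sum_def by blast
next
  fix n x assume "x \<in> act_sum A B i"
  then obtain a b where ab: "a \<in> A" "b \<in> B" and x: "x = act i a \<oplus>\<^bsub>M\<^esub> b" by (auto simp: act_sum_def)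
  define a' where "a' = (if d i \<le> n then homog_comp (n - d i) a else \<zero>\<^bsub>M\<^esub>)"
  have a': "a' \<in> A"
    using graded_submodule_homog_comp[OF A ab(1)] graded_submodule_zero[OF A] by (auto simp: a'_def)
  have "homog_comp n x = act i a' \<oplus>\<^bsub>M\<^esub> homog_comp n b"
    by (simp add: x homog_comp_add homog_comp_act[OF i] a'_def act_zero[OF i])
  then show "homog_comp n x \<in> act_sum A B i"
    using a' graded_submodule_homog_comp[OF B ab(2)] unfolding act_sum_def by blast
qed

lemma act_sum_subset: "B \<subseteq> A \<Longrightarrow> act_sum A B i \<subseteq> A"
  using graded_submodule_act[OF A i] graded_submodule_add[OF A] by (auto simp: act_sum_def)

lemma subset_act_sum: "B \<subseteq> act_sum A B i"
proof
  fix b assume b: "b \<in> B"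
  then have "b = act i \<zero>\<^bsub>M\<^esub> \<oplus>\<^bsub>M\<^esub> b"
    using graded_submodule_carrier[OF B] by (simp add: act_zero[OF i])
  then show "b \<in> act_sum A B i" using b graded_submodule_zero[OF A] unfolding act_sum_def by blast
qed

lemma colon_subset: "colon A B i \<subseteq> A"
  by (auto simp: colon_def)

lemma subset_colon: "B \<subseteq> A \<Longrightarrow> B \<subseteq> colon A B i"
  using graded_submodule_act[OF B i] by (auto simp: colon_def)

lemma act_image_subset_act_sum: "act i ` A \<subseteq> act_sum A B i"
proof
  fix x assume "x \<in> act i ` A"
  then obtain a where a: "a \<in> A" "x = act i a" by auto
  then have "x = act i a \<oplus>\<^bsub>M\<^esub> \<zero>\<^bsub>M\<^esub>"
    using act_closed[OF i] graded_submodule_carrier[OF A] by simp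
  then show "x \<in> act_sum A B i" using a graded_submodule_zero[OF B] unfolding act_sum_def by blast
qed

end

text \<open>The maps a |-> (a, -x_i a) and (a, b) |-> x_i a + b of the exact sequence
  0 -> K_n -> A_n + B_{n+d_i} -> I_{n+d_i} -> 0.\<close>

definition colon_embed :: "nat \<Rightarrow> (nat \<Rightarrow> 'm) \<Rightarrow> (nat \<Rightarrow> 'm)" where
  "colon_embed i a = a \<oplus>\<^bsub>M\<^esub> \<ominus>\<^bsub>M\<^esub> act i a"

definition act_plus :: "nat \<Rightarrow> nat \<Rightarrow> (nat \<Rightarrow> 'm) \<Rightarrow> (nat \<Rightarrow> 'm)" where
  "act_plus i n x = act i (homog_comp n x) \<oplus>\<^bsub>M\<^esub> homog_comp (n + d i) x"

context
  fixes A B i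
  assumes A: "graded_submodule A" and B: "graded_submodule B" and i: "i < m"
    and d_pos: "0 < d i"
begin

lemma colon_degree_partD:
  assumes "a \<in> degree_part (colon A B i) n"
  shows "a \<in> carrier M" "a \<in> A" "act i a \<in> B" "act i a \<in> carrier M"
  using assms graded_submodule_carrier[OF A] act_closed[OF i] by (auto simp: degree_part_def colon_def)

lemma homog_comp_colon_embed:
  assumes a: "a \<in> degree_part (colon A B i) n"
  shows "homog_comp j (colon_embed i a)
    = (if j = n then a else if j = n + d i then \<ominus>\<^bsub>M\<^esub> act i a else \<zero>\<^bsub>M\<^esub>)"
  using colon_degree_partD[OF a] homog_comp_act_degree_part[OF i a, of j]
    homog_comp_degree_part[OF a, of j] d_pos
  by (auto simp: colon_embed_def homog_comp_add homog_comp_neg)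

lemma colon_embed_in_sum_part:
  assumes a: "a \<in> degree_part (colon A B i) n"
  shows "colon_embed i a \<in> sum_part A n B (n + d i)"
  using homog_comp_colon_embed[OF a] colon_degree_partD[OF a] graded_submodule_neg[OF B]
    graded_submodule_zero[OF A] graded_submodule_zero[OF B] d_pos
  by (auto simp: sum_part_def colon_embed_def)

lemma act_plus_in_degree_part:
  assumes x: "x \<in> sum_part A n B (n + d i)"
  shows "act_plus i n x \<in> degree_part (act_sum A B i) (n + d i)"
proof -
  have x_car: "x \<in> carrier M" using x by (simp add: sum_part_def)
  have x_n: "homog_comp n x \<in> degree_part (carrier M) n"
    using homog_comp_closed[OF x_car] by (simp add: degree_part_iff homog_comp_homog_comp)
  have "act_plus i n x \<in> act_sum A B i"
    using x unfolding sum_part_def act_sum_def act_plus_def by blast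
  moreover have "homog_comp j (act_plus i n x) = \<zero>\<^bsub>M\<^esub>" if "j \<noteq> n + d i" for j
    using homog_comp_act_degree_part[OF i x_n, of j] that homog_comp_closed[OF x_car]
      act_closed[OF i homog_comp_closed[OF x_car]]
    by (simp add: act_plus_def homog_comp_add homog_comp_homog_comp)
  ultimately show ?thesis unfolding degree_part_iff by blast
qed

lemma act_plus_surjective:
  "act_plus i n ` sum_part A n B (n + d i) = degree_part (act_sum A B i) (n + d i)"
proof (intro equalityI subsetI)
  fix y assume y: "y \<in> degree_part (act_sum A B i) (n + d i)"
  then obtain a b where ab: "a \<in> A" "b \<in> B" and y_ab: "y = act i a \<oplus>\<^bsub>M\<^esub> b"
    by (auto simp: degree_part_def act_sum_def)
  have ab_car: "a \<in> carrier M" "b \<in> carrier M"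
    using ab graded_submodule_carrier[OF A] graded_submodule_carrier[OF B] by auto
  define x where "x = homog_comp n a \<oplus>\<^bsub>M\<^esub> homog_comp (n + d i) b"
  have x_comp: "homog_comp j x = (if j = n then homog_comp n a
      else if j = n + d i then homog_comp (n + d i) b else \<zero>\<^bsub>M\<^esub>)" for j
    using ab_car homog_comp_closed d_pos by (simp add: x_def homog_comp_add homog_comp_homog_comp)
  have "x \<in> sum_part A n B (n + d i)"
    using x_comp ab_car homog_comp_closed rees_add_closed graded_submodule_homog_comp[OF A ab(1)]
      graded_submodule_homog_comp[OF B ab(2)] d_pos
    unfolding sum_part_def x_def by auto
  moreover have "act_plus i n x = y"
  proof -
    have "y = homog_comp (n + d i) y" using homog_comp_degree_part[OF y] by simp
    also have "\<dots> = act i (homog_comp n a) \<oplus>\<^bsub>M\<^esub> homog_comp (n + d i) b"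
      using ab_car act_closed[OF i] by (simp add: y_ab homog_comp_add homog_comp_act[OF i])
    finally show ?thesis using x_comp[of n] x_comp[of "n + d i"] d_pos by (simp add: act_plus_def)
  qed
  ultimately show "y \<in> act_plus i n ` sum_part A n B (n + d i)" by blast
qed (use act_plus_in_degree_part in blast)

lemma act_plus_kernel:
  "colon_embed i ` degree_part (colon A B i) n
    = {x \<in> sum_part A n B (n + d i). act_plus i n x = \<zero>\<^bsub>M\<^esub>}"
proof (intro equalityI subsetI)
  fix x assume "x \<in> colon_embed i ` degree_part (colon A B i) n"
  then obtain a where a: "a \<in> degree_part (colon A B i) n" and x: "x = colon_embed i a" by auto
  have "act_plus i n x = \<zero>\<^bsub>M\<^esub>"
    using homog_comp_colon_embed[OF a, of n] homog_comp_colon_embed[OF a, of "n + d i"]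
      colon_degree_partD[OF a] d_pos by (simp add: x act_plus_def Rees.r_neg)
  then show "x \<in> {x \<in> sum_part A n B (n + d i). act_plus i n x = \<zero>\<^bsub>M\<^esub>}"
    using colon_embed_in_sum_part[OF a] x by simp
next
  fix x assume "x \<in> {x \<in> sum_part A n B (n + d i). act_plus i n x = \<zero>\<^bsub>M\<^esub>}"
  then have x: "x \<in> sum_part A n B (n + d i)" and ker: "act_plus i n x = \<zero>\<^bsub>M\<^esub>" by auto
  define a where "a = homog_comp n x"
  have x_car: "x \<in> carrier M" using x by (simp add: sum_part_def)
  have car: "a \<in> carrier M" "act i a \<in> carrier M" "homog_comp (n + d i) x \<in> carrier M"
    using homog_comp_closed[OF x_car] act_closed[OF i] a_def by auto
  have neg: "homog_comp (n + d i) x = \<ominus>\<^bsub>M\<^esub> act i a"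
    using Rees.minus_equality[OF _ car(2) car(3)] ker car by (simp add: a_def act_plus_def Rees.a_comm)
  have "\<ominus>\<^bsub>M\<^esub> homog_comp (n + d i) x \<in> B"
    using x graded_submodule_neg[OF B] by (simp add: sum_part_def)
  then have "act i a \<in> B" using neg car by simp
  then have a_colon: "a \<in> degree_part (colon A B i) n"
    using x homog_comp_homog_comp by (auto simp: a_def degree_part_iff colon_def sum_part_def)
  have "x = colon_embed i a"
    using sum_part_decompose[OF x] d_pos neg by (simp add: a_def colon_embed_def)
  then show "x \<in> colon_embed i ` degree_part (colon A B i) n" using a_colon by blast
qed

lemma length_sum_part_colon:
  assumes lam: "length_function R lam"
  shows "lam (submod M (sum_part A n B (n + d i)))
    = lam (submod M (degree_part (colon A B i) n)) + lam (submod M (degree_part (act_sum A B i) (n + d i)))"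
proof (rule length_function_exact[OF lam rees_module
      degree_part_submodule[OF graded_submodule_submodule[OF graded_submodule_colon[OF A B i]]]
      sum_part_submodule[OF graded_submodule_submodule[OF A] graded_submodule_submodule[OF B]]
      degree_part_submodule[OF graded_submodule_submodule[OF graded_submodule_act_sum[OF A B i]]]])
  show "mod_hom R (submod M (degree_part (colon A B i) n)) (submod M (sum_part A n B (n + d i)))
      (colon_embed i)"
    unfolding mod_hom_def
    using colon_embed_in_sum_part colon_degree_partD graded_submodule_colon[OF A B i]
    by (auto simp: colon_embed_def act_add[OF i] act_smult[OF i] Rees.minus_add Rees.a_ac
        Rees.smult_r_distr Rees.smult_r_minus)
  show "mod_hom R (submod M (sum_part A n B (n + d i))) (submod M (degree_part (act_sum A B i) (n + d i)))
      (act_plus i n)"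
    unfolding mod_hom_def
    using act_plus_in_degree_part homog_comp_closed act_closed[OF i]
    by (auto simp: sum_part_def act_plus_def homog_comp_add homog_comp_smult act_add[OF i]
        act_smult[OF i] Rees.a_ac Rees.smult_r_distr)
  show "inj_on (colon_embed i) (degree_part (colon A B i) n)"
    using homog_comp_colon_embed by (intro inj_onI) (metis (no_types, lifting))
qed (simp_all add: act_plus_surjective act_plus_kernel)

lemma length_colon_act_sum:
  assumes lam: "length_function R lam"
  shows "lam (submod M (degree_part A n)) + lam (submod M (degree_part B (n + d i)))
    = lam (submod M (degree_part (colon A B i) n)) + lam (submod M (degree_part (act_sum A B i) (n + d i)))"
  using length_sum_part[OF lam graded_submodule_submodule[OF A] graded_submodule_submodule[OF B]]
    length_sum_part_colon[OF lam] d_pos by simp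

end

end

section \<open>Rationality of the Hilbert series\<close>

locale hilbert_serre = homogeneous_operators R N Nf m Y d
  for R :: "'r ring" and N :: "('r, 'm) module" and Nf m Y d +
  fixes lam :: "('r, nat \<Rightarrow> 'm) module \<Rightarrow> ennreal"
  assumes length: "length_function R lam"
    and finite_length: "lam (submod M (degree_part (carrier M) n)) < \<infinity>"
    and d_pos: "i < m \<Longrightarrow> 0 < d i"
    and noetherian: "noetherian_poly_module R M m act"
begin

text \<open>Passing to real numbers loses nothing: degree parts of graded submodules have finite length
  (lemma finite_length_graded).\<close>

definition len_diff :: "(nat \<Rightarrow> 'm) set \<Rightarrow> (nat \<Rightarrow> 'm) set \<Rightarrow> nat \<Rightarrow> real" where
  "len_diff A B n = enn2real (lam (submod M (degree_part A n))) - enn2real (lam (submod M (degree_part B n)))"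

lemma finite_length_graded:
  assumes "graded_submodule P"
  shows "lam (submod M (degree_part P n)) < \<infinity>"
proof -
  have "lam (submod M (degree_part P n)) \<le> lam (submod M (degree_part (carrier M) n))"
    using graded_submodule_carrier[OF assms]
    by (intro length_function_mono[OF length rees_module degree_part_submodule degree_part_submodule]
        graded_submodule_submodule[OF assms] Rees.carrier_is_submodule) (auto simp: degree_part_def)
  then show ?thesis using finite_length le_less_trans by blast
qed

context
  fixes A B
  assumes A: "graded_submodule A" and B: "graded_submodule B" and B_A: "B \<subseteq> A"
    and killed: "\<And>j. j < m \<Longrightarrow> act j ` A \<subseteq> B"
begin

lemma poly_submodule_eventually_in:
  "poly_submodule R M m act {a \<in> A. \<forall>n>D. homog_comp n a \<in> B}"
  unfolding poly_submodule_def
proof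
  show "submodule {a \<in> A. \<forall>n>D. homog_comp n a \<in> B} R M"
    using graded_submodule_carrier[OF A] graded_submodule_zero[OF A] graded_submodule_zero[OF B]
      graded_submodule_add[OF A] graded_submodule_add[OF B]
      graded_submodule_smult[OF A] graded_submodule_smult[OF B]
    by (intro Rees.submoduleI_smult) (auto simp: homog_comp_zero homog_comp_add homog_comp_smult)
  show "\<forall>j<m. act j ` {a \<in> A. \<forall>n>D. homog_comp n a \<in> B} \<subseteq> {a \<in> A. \<forall>n>D. homog_comp n a \<in> B}"
  proof (intro allI impI subsetI)
    fix j x assume j: "j < m" and "x \<in> act j ` {a \<in> A. \<forall>n>D. homog_comp n a \<in> B}"
    then have "x \<in> B" using killed[OF j] by blast
    then show "x \<in> {a \<in> A. \<forall>n>D. homog_comp n a \<in> B}"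
      using B_A graded_submodule_homog_comp[OF B] by blast
  qed
qed

lemma len_diff_eventually_zero: "\<exists>D. \<forall>n>D. len_diff A B n = 0"
proof -
  have "poly_submodule R M m act A" using A by (simp add: graded_submodule_def)
  then obtain G where G: "finite G" "G \<subseteq> A" and A_G: "A = poly_span R M m act G"
    using noetherian unfolding noetherian_poly_module_def by blast
  have "finite {n. g n \<noteq> z}" if "g \<in> G" for g
    using that G(2) graded_submodule_carrier[OF A] rees_carrier_iff by blast
  then have "finite (\<Union>g\<in>G. {n. g n \<noteq> z})" using G(1) by blast
  then obtain D where "\<forall>n \<in> (\<Union>g\<in>G. {n. g n \<noteq> z}). n \<le> D"
    using finite_nat_set_iff_bounded_le by meson
  then have D: "\<And>g n. g \<in> G \<Longrightarrow> g n \<noteq> z \<Longrightarrow> n \<le> D" by blast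
  have "homog_comp n g \<in> B" if "g \<in> G" "n > D" for g n
  proof -
    have "g n = z" using D[OF that(1)] that(2) by (meson leD)
    then have "homog_comp n g = \<zero>\<^bsub>M\<^esub>" by (simp add: homog_comp_eq_zero_iff)
    then show ?thesis using graded_submodule_zero[OF B] by simp
  qed
  then have "G \<subseteq> {a \<in> A. \<forall>n>D. homog_comp n a \<in> B}" using G(2) by blast
  then have A_tail: "A \<subseteq> {a \<in> A. \<forall>n>D. homog_comp n a \<in> B}"
    using poly_submodule_eventually_in A_G unfolding poly_span_def by blast
  have "degree_part A n = degree_part B n" if "n > D" for n
  proof (intro equalityI subsetI)
    fix a assume a: "a \<in> degree_part A n"
    then have "homog_comp n a \<in> B" using A_tail that by (auto simp: degree_part_def)
    then show "a \<in> degree_part B n" using a homog_comp_degree_part[OF a, of n] by (simp add: degree_part_def)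
  qed (use B_A in \<open>auto simp: degree_part_def\<close>)
  then show ?thesis by (intro exI[of _ D]) (simp add: len_diff_def)
qed

end

context
  fixes A B i
  assumes A: "graded_submodule A" and B: "graded_submodule B" and i: "i < m"
begin

lemma len_diff_recurrence:
  "len_diff A B (n + d i) - len_diff A B n
    = len_diff A (act_sum A B i) (n + d i) - len_diff (colon A B i) B n"
proof -
  note fin = finite_length_graded[unfolded infinity_ennreal_def]
  have "lam (submod M (degree_part A n)) + lam (submod M (degree_part B (n + d i)))
      = lam (submod M (degree_part (colon A B i) n))
        + lam (submod M (degree_part (act_sum A B i) (n + d i)))"
    by (rule length_colon_act_sum[OF A B i d_pos[OF i] length])
  then have "enn2real (lam (submod M (degree_part A n))) + enn2real (lam (submod M (degree_part B (n + d i))))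
      = enn2real (lam (submod M (degree_part (colon A B i) n)))
        + enn2real (lam (submod M (degree_part (act_sum A B i) (n + d i))))"
    by (simp only: enn2real_plus[OF fin[OF A] fin[OF B], symmetric]
        enn2real_plus[OF fin[OF graded_submodule_colon[OF A B i]]
          fin[OF graded_submodule_act_sum[OF A B i]], symmetric])
  then show ?thesis unfolding len_diff_def by linarith
qed

end

lemma len_diff_series_times_poly:
  assumes "finite V" and "V \<subseteq> {..<m}"
    and "graded_submodule A" and "graded_submodule B" and "B \<subseteq> A"
    and "\<And>j. j < m \<Longrightarrow> j \<notin> V \<Longrightarrow> act j ` A \<subseteq> B"
  shows "\<exists>p. Abs_fps (len_diff A B) * (\<Prod>j\<in>V. 1 - fps_X ^ d j) = fps_of_poly p"
  using assms
proof (induction V arbitrary: A B rule: finite_induct)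
  case empty
  then obtain D where "\<forall>n>D. len_diff A B n = 0"
    using len_diff_eventually_zero[OF empty.prems(2-4)] by blast
  then show ?case using fps_eventually_zero_is_poly[of D "len_diff A B"] by auto
next
  case (insert i V)
  have i: "i < m" using insert.prems(1) by auto
  note A = insert.prems(2) and B = insert.prems(3) and B_A = insert.prems(4)
  have V: "V \<subseteq> {..<m}" using insert.prems(1) by simp
  have killed_act_sum: "act j ` A \<subseteq> act_sum A B i" if "j < m" "j \<notin> V" for j
  proof (cases "j = i")
    case False
    then show ?thesis using insert.prems(5)[of j] that subset_act_sum[OF A B i] by blast
  qed (simp add: act_image_subset_act_sum[OF A B i])
  obtain p1 where p1: "Abs_fps (len_diff A (act_sum A B i)) * (\<Prod>j\<in>V. 1 - fps_X ^ d j) = fps_of_poly p1"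
    using insert.IH[OF V A graded_submodule_act_sum[OF A B i] act_sum_subset[OF A B i B_A]
        killed_act_sum] by blast
  have killed_colon: "act j ` colon A B i \<subseteq> B" if "j < m" "j \<notin> V" for j
  proof (cases "j = i")
    case False
    then show ?thesis using insert.prems(5)[of j] that colon_subset[OF A B i] by blast
  qed (auto simp: colon_def)
  obtain p2 where p2: "Abs_fps (len_diff (colon A B i) B) * (\<Prod>j\<in>V. 1 - fps_X ^ d j) = fps_of_poly p2"
    using insert.IH[OF V graded_submodule_colon[OF A B i] B subset_colon[OF A B i B_A]
        killed_colon] by blast
  obtain q :: "real poly" where q: "(\<Prod>j\<in>V. 1 - fps_X ^ d j) = fps_of_poly q"
    using prod_one_minus_fps_X_power_is_poly[where V = V and e = d] by blast
  have "\<exists>p. Abs_fps (len_diff A B) * ((1 - fps_X ^ d i) * fps_of_poly q) = fps_of_poly p"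
    using fps_recurrence_times_poly[of "len_diff A B" "d i" "len_diff A (act_sum A B i)"
        "len_diff (colon A B i) B", OF len_diff_recurrence[OF A B i]] p1 p2 unfolding q by blast
  then show ?case using insert.hyps q by (simp add: mult.assoc)
qed

lemma hilbert_series_rational:
  "\<exists>p. Abs_fps (\<lambda>n. enn2real (lam (submod M (degree_part (carrier M) n))))
     = fps_of_poly p / (\<Prod>i<m. 1 - fps_X ^ d i)"
proof -
  obtain p where p: "Abs_fps (len_diff (carrier M) {\<zero>\<^bsub>M\<^esub>}) * (\<Prod>i<m. 1 - fps_X ^ d i) = fps_of_poly p"
    using len_diff_series_times_poly[of "{..<m}" "carrier M" "{\<zero>\<^bsub>M\<^esub>}"] graded_submodule_rees
      graded_submodule_trivial rees_zero_closed by auto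
  have "degree_part {\<zero>\<^bsub>M\<^esub>} n = {\<zero>\<^bsub>M\<^esub>}" for n by (auto simp: degree_part_def rees_zero)
  then have "len_diff (carrier M) {\<zero>\<^bsub>M\<^esub>} = (\<lambda>n. enn2real (lam (submod M (degree_part (carrier M) n))))"
    using length_function_zero_submodule[OF length rees_module] by (simp add: len_diff_def fun_eq_iff)
  moreover have "(\<Prod>i<m. 1 - fps_X ^ d i :: real fps) \<noteq> 0"
  proof -
    have "(1 - fps_X ^ d i :: real fps) \<noteq> 0" if "i < m" for i
    proof -
      have "fps_nth (1 - fps_X ^ d i :: real fps) 0 = 1" using d_pos[OF that] by simp
      then show ?thesis by (metis fps_zero_nth zero_neq_one)
    qed
    then show ?thesis by (simp add: prod_zero_iff)
  qed
  ultimately show ?thesis using p by (metis nonzero_mult_div_cancel_right)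
qed

end

lemma filtered_module_incr_filtering:
  "poly_module R N k X \<Longrightarrow> incr_filtering R N k X \<gamma> Nf \<Longrightarrow> filtered_module R N Nf"
  by (rule filtered_module.intro) (auto simp: poly_module_def incr_filtering_def)

lemma rees_hilbert_series_rational:
  assumes N: "poly_module R N k X" and filt: "incr_filtering R N k X \<gamma> Nf"
    and lam: "length_function R lam"
    and finite: "\<And>n. lam (submod (rees N Nf) (rees_component N Nf n)) < \<infinity>"
    and pos: "\<And>i. i < k \<Longrightarrow> 0 < \<gamma> i"
    and noetherian: "noetherian_poly_module R (rees N Nf) (Suc k) (rees_ops N k X \<gamma>)"
  shows "\<exists>p. Abs_fps (\<lambda>n. enn2real (lam (submod (rees N Nf) (rees_component N Nf n))))
    = fps_of_poly p / ((1 - fps_X) * (\<Prod>i<k. 1 - fps_X ^ \<gamma> i))"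
proof -
  \<comment> \<open>y becomes the k-th operator: the identity of N, raised in degree by 1\<close>
  define Y where "Y i = (if i < k then X i else id)" for i
  define d where "d i = (if i < k then \<gamma> i else 1)" for i
  have hom: "homogeneous_operators R N Nf (Suc k) Y d"
  proof (intro homogeneous_operators.intro homogeneous_operators_axioms.intro)
    show "filtered_module R N Nf" by (rule filtered_module_incr_filtering[OF N filt])
    show "mod_hom R N N (Y i)" if "i < Suc k" for i
      using N that by (auto simp: poly_module_def Y_def mod_hom_def)
    show "Y i (Y j v) = Y j (Y i v)" if "i < Suc k" "j < Suc k" "v \<in> carrier N" for i j v
      using N that by (auto simp: poly_module_def Y_def)
    show "Y i x \<in> Nf (j + d i)" if "i < Suc k" "x \<in> Nf j" for i x j
      using filt that unfolding incr_filtering_def Y_def d_def by (auto simp: image_subset_iff)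
  qed
  then interpret homogeneous_operators R N Nf "Suc k" Y d .
  have "rees_ops N k X \<gamma> = act"
    by (auto simp: fun_eq_iff rees_ops_def rees_X_def rees_Y_def act_def Y_def d_def)
  then interpret hilbert_serre R N Nf "Suc k" Y d lam
    using lam finite pos noetherian
    by (intro hilbert_serre.intro hilbert_serre_axioms.intro hom) (auto simp: d_def rees_component_eq)
  have "(\<Prod>i<Suc k. 1 - fps_X ^ d i) = (1 - fps_X) * (\<Prod>i<k. 1 - fps_X ^ \<gamma> i :: real fps)"
    by (simp add: d_def)
  then show ?thesis using hilbert_series_rational by (simp add: rees_component_eq)
qed

theorem theorem4p2:
  fixes R :: "'r ring"
    and lam1 :: "('r, 'm) module \<Rightarrow> ennreal"
    and lam2 :: "('r, nat \<Rightarrow> 'm) module \<Rightarrow> ennreal"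
    and N :: "('r, 'm) module"
    and k :: nat
    and X :: "nat \<Rightarrow> 'm \<Rightarrow> 'm"
    and \<gamma> :: "nat \<Rightarrow> nat"
    and Nf :: "nat \<Rightarrow> 'm set"
  assumes R: "cring R"
    and lam1: "length_function R lam1"
    and lam2: "length_function R lam2"
    and compat: "length_compatible R lam1 lam2"
    and N: "poly_module R N k X"
    and filt: "incr_filtering R N k X \<gamma> Nf"
  shows "(\<lambda>n. lam1 (submod N (Nf n))) = (\<lambda>n. lam2 (submod (rees N Nf) (rees_component N Nf n)))
    \<and> ((\<forall>i<k. \<gamma> i > 0) \<and> (\<forall>n. lam1 (submod N (Nf n)) < \<infinity>)
         \<and> noetherian_poly_module R (rees N Nf) (Suc k) (rees_ops N k X \<gamma>)
       \<longrightarrow> (\<exists>p :: real poly.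
             Abs_fps (\<lambda>n. enn2real (lam1 (submod N (Nf n))))
             = fps_of_poly p / ((1 - fps_X) * (\<Prod>i<k. 1 - fps_X ^ \<gamma> i))))"
proof -
  \<comment> \<open>R and lam1 need no hypotheses: N is an R-module, and compat pins down lam1 on each N_n\<close>
  interpret filtered_module R N Nf by (rule filtered_module_incr_filtering[OF N filt])
  have components: "lam1 (submod N (Nf n)) = lam2 (submod M (rees_component N Nf n))" for n
    by (rule length_compatible_rees_component[OF compat])
  show ?thesis
    using rees_hilbert_series_rational[OF N filt lam2] by (simp add: components)
qed

end
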